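(* Let $G,H$ be groups and suppose that $\mathrm{Hom}(H,G)$ contains a homomorphism with infinite image. Let $\mathcal{T}=\phi^*\circ\tau$ with $\phi\in\mathrm{Hom}(H,G)$ and $\tau\in\mathrm{CA}(A^G)$. Then $\mathcal{T}$ is constant if and only if $\mathcal{T}=\psi^*\circ\tau$ for every $\psi\in\mathrm{Hom}(H,G)$.
   Context: $A$ is a finite set with $|A|\ge 2$. $A^G$ is the set of functions $G\to A$ with shift action $(g\cdot x)(k):=x(g^{-1}k)$. $\mathrm{CA}(A^G)$ is the set of maps $\tau:A^G\to A^G$ for which there exist finite $T\subseteq G$ and $\mu:A^T\to A$ with $\tau(x)(g)=\mu((g^{-1}\cdot x)|_T)$ for all $x,g$. For $\phi\in\mathrm{Hom}(H,G)$, $\phi^*:A^G\to A^H$ is $\phi^*(x):=x\circ\phi$. *)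

theory Defs
  imports Main "HOL-Library.FuncSet"
begin

text \<open>Groups are modelled as types of class group_add (written additively, not
necessarily commutative). Configurations A^G are functions 'g => 'a.\<close>

definition shift :: "'g::group_add \<Rightarrow> ('g \<Rightarrow> 'a) \<Rightarrow> ('g \<Rightarrow> 'a)" where
  "shift g x = (\<lambda>k. x (- g + k))"

text \<open>Cellular automata: tau x g = mu ((g^-1 . x) restricted to T), T finite;
A^T is represented by functions extensional on T (restrict).\<close>
definition CA :: "(('g::group_add \<Rightarrow> 'a) \<Rightarrow> ('g \<Rightarrow> 'a)) set" where
  "CA = {\<tau>. \<exists>(T::'g set) (\<mu>::('g \<Rightarrow> 'a) \<Rightarrow> 'a). finite T \<and>
            (\<forall>x g. \<tau> x g = \<mu> (restrict (shift (- g) x) T))}"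

definition grp_hom :: "('h::group_add \<Rightarrow> 'g::group_add) set" where
  "grp_hom = {\<phi>. \<forall>a b. \<phi> (a + b) = \<phi> a + \<phi> b}"

definition pullback :: "('h \<Rightarrow> 'g) \<Rightarrow> ('g \<Rightarrow> 'a) \<Rightarrow> ('h \<Rightarrow> 'a)" where
  "pullback \<phi> x = x \<circ> \<phi>"

end

theory Submission
  imports Defs
begin

text \<open>A cellular automaton commutes with shifts, so its value anywhere is its value at the origin
of a shifted configuration; hence it is constant as soon as its value at the origin does not depend
on the configuration. If the pullbacks of \<tau> along all homomorphisms agree, comparing the zero
homomorphism with one of infinite image shows that every configuration \<tau> x takes the same value
at 0 and at infinitely many points g. Choosing such a g with g + T disjoint from the memory set T,
a configuration that equals x on T and a shift of y on g + T shows that the local rule sees x and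
y alike.\<close>

lemma shift_0 [simp]: "shift 0 x = x"
  by (simp add: shift_def)

lemma CA_apply_eq_apply_origin:
  assumes "\<tau> \<in> CA"
  shows "\<tau> x g = \<tau> (shift (- g) x) 0"
proof -
  obtain T \<mu> where "\<And>x g. \<tau> x g = \<mu> (restrict (shift (- g) x) T)"
    using assms unfolding CA_def by blast
  then show ?thesis by (simp add: shift_def)
qed

lemma CA_eq_const_if_origin_const:
  assumes "\<tau> \<in> CA" and "\<And>x. \<tau> x 0 = c"
  shows "\<tau> x = (\<lambda>_. c)"
  using assms by (simp add: fun_eq_iff CA_apply_eq_apply_origin[OF assms(1), of x])

lemma grp_hom_zero: "\<phi> \<in> grp_hom \<Longrightarrow> \<phi> 0 = 0"
proof -
  assume "\<phi> \<in> grp_hom"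
  then have "\<phi> (0 + 0) = \<phi> 0 + \<phi> 0"
    unfolding grp_hom_def by blast
  then have "\<phi> 0 + \<phi> 0 = \<phi> 0 + 0" by simp
  then show ?thesis by (rule add_left_imp_eq)
qed

lemma zero_in_grp_hom: "(\<lambda>_. 0) \<in> grp_hom"
  by (simp add: grp_hom_def)

lemma pullback_apply: "pullback \<phi> x h = x (\<phi> h)"
  by (simp add: pullback_def)

lemma infinite_obtain_translate_disjoint:
  fixes T S :: "'g::group_add set"
  assumes "finite T" and "infinite S"
  obtains g where "g \<in> S" and "\<And>k. k \<in> T \<Longrightarrow> g + k \<notin> T"
proof -
  let ?D = "(\<lambda>(t, k). t - k) ` (T \<times> T)"
  have "finite ?D" using assms(1) by simp
  then have "S - ?D \<noteq> {}"
    using assms(2) by (metis Diff_infinite_finite finite.emptyI)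
  then obtain g where "g \<in> S" and "g \<notin> ?D" by blast
  have "g + k \<notin> T" if k: "k \<in> T" for k
  proof
    assume "g + k \<in> T"
    then have "(g + k) - k \<in> ?D"
      using k by (intro image_eqI[where x = "(g + k, k)"]) simp_all
    with \<open>g \<notin> ?D\<close> show False by simp
  qed
  with \<open>g \<in> S\<close> show thesis by (rule that)
qed

lemma CA_origin_const_if_invariant_on_infinite:
  assumes "\<tau> \<in> CA" and "infinite S" and "\<And>x g. g \<in> S \<Longrightarrow> \<tau> x g = \<tau> x 0"
  shows "\<tau> x 0 = \<tau> y 0"
proof -
  obtain T \<mu> where "finite T" and \<tau>: "\<And>x g. \<tau> x g = \<mu> (restrict (shift (- g) x) T)"
    using assms(1) unfolding CA_def by blast
  obtain g where "g \<in> S" and disjoint: "\<And>k. k \<in> T \<Longrightarrow> g + k \<notin> T"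
    using infinite_obtain_translate_disjoint[OF \<open>finite T\<close> assms(2)] by blast
  define z where "z = (\<lambda>k. if k \<in> T then x k else shift g y k)"
  have "restrict z T = restrict x T"
    by (auto simp: restrict_def shift_def z_def)
  moreover have "restrict (shift (- g) z) T = restrict y T"
    using disjoint by (auto simp: restrict_def shift_def z_def add.assoc[symmetric])
  moreover have "\<tau> z g = \<tau> z 0"
    using assms(3) \<open>g \<in> S\<close> .
  ultimately show ?thesis by (simp add: \<tau>)
qed

lemma pullback_CA_const_iff:
  assumes "\<phi> \<in> grp_hom" and "\<tau> \<in> CA"
  shows "(\<exists>c. \<forall>x. (pullback \<phi> \<circ> \<tau>) x = c) \<longleftrightarrow> (\<exists>c. \<forall>x. \<tau> x = (\<lambda>_. c))"
proof
  assume "\<exists>c. \<forall>x. (pullback \<phi> \<circ> \<tau>) x = c"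
  then obtain c where "\<And>x. pullback \<phi> (\<tau> x) = c" by auto
  then have "\<tau> x 0 = c 0" for x
    using pullback_apply[of \<phi> "\<tau> x" 0] by (simp add: grp_hom_zero[OF assms(1)])
  then show "\<exists>c. \<forall>x. \<tau> x = (\<lambda>_. c)"
    using CA_eq_const_if_origin_const[OF assms(2)] by blast
qed (auto simp: pullback_def)

theorem lemma3p8:
  fixes \<phi> :: "'h::group_add \<Rightarrow> 'g::group_add"
    and \<tau> :: "('g \<Rightarrow> 'a::finite) \<Rightarrow> ('g \<Rightarrow> 'a)"
  assumes "card (UNIV :: 'a set) \<ge> 2"
    and "\<exists>\<phi>0 \<in> (grp_hom :: ('h \<Rightarrow> 'g) set). infinite (range \<phi>0)"
    and "\<phi> \<in> grp_hom"
    and "\<tau> \<in> CA"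
  shows "(\<exists>c. \<forall>x. (pullback \<phi> \<circ> \<tau>) x = c) \<longleftrightarrow>
         (\<forall>\<psi> \<in> grp_hom. pullback \<phi> \<circ> \<tau> = pullback \<psi> \<circ> \<tau>)"
proof -
  obtain \<phi>0 :: "'h \<Rightarrow> 'g" where "\<phi>0 \<in> grp_hom" and "infinite (range \<phi>0)"
    using assms(2) by blast
  have "(\<exists>c. \<forall>x. \<tau> x = (\<lambda>_. c)) \<Longrightarrow> pullback \<phi> \<circ> \<tau> = pullback \<psi> \<circ> \<tau>" for \<psi> :: "'h \<Rightarrow> 'g"
    by (auto simp: fun_eq_iff pullback_def)
  moreover have "(\<forall>\<psi> \<in> grp_hom. pullback \<phi> \<circ> \<tau> = pullback \<psi> \<circ> \<tau>) \<Longrightarrow> \<exists>c. \<forall>x. \<tau> x = (\<lambda>_. c)"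
  proof -
    assume "\<forall>\<psi> \<in> grp_hom. pullback \<phi> \<circ> \<tau> = pullback \<psi> \<circ> \<tau>"
    then have "pullback \<phi>0 \<circ> \<tau> = pullback (\<lambda>_. 0) \<circ> \<tau>"
      using \<open>\<phi>0 \<in> grp_hom\<close> zero_in_grp_hom by metis
    then have "\<tau> x g = \<tau> x 0" if "g \<in> range \<phi>0" for x g
      using that by (auto simp: fun_eq_iff pullback_def)
    then have "\<tau> x 0 = \<tau> undefined 0" for x
      by (rule CA_origin_const_if_invariant_on_infinite[OF assms(4) \<open>infinite (range \<phi>0)\<close>])
    then show ?thesis
      using CA_eq_const_if_origin_const[OF assms(4)] by blast
  qed
  ultimately show ?thesis
    unfolding pullback_CA_const_iff[OF assms(3,4)] by blast
qed

end
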